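(* Let $R$ be a ring with identity and let $e$ be an idempotent of $R$. If $R$ is SSP, then the ring $eRe$ (with identity $e$) is also SSP.
   Context: Rings are associative with identity. A ring $S$ is right SSP if the sum of any two direct summands of the right module $S_S$ is again a direct summand of $S_S$; left SSP is defined analogously with ${}_SS$; $S$ is SSP if it is both right and left SSP. (Right SSP and left SSP are equivalent conditions.) *)

theory Defs
  imports "HOL-Algebra.AbelCoset"
begin

definition right_ideal_of :: "('a, 'b) ring_scheme \<Rightarrow> 'a set \<Rightarrow> bool" where
  "right_ideal_of R I \<longleftrightarrow> additive_subgroup I R \<and>
     (\<forall>x\<in>I. \<forall>r\<in>carrier R. x \<otimes>\<^bsub>R\<^esub> r \<in> I)"

definition left_ideal_of :: "('a, 'b) ring_scheme \<Rightarrow> 'a set \<Rightarrow> bool" where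
  "left_ideal_of R I \<longleftrightarrow> additive_subgroup I R \<and>
     (\<forall>x\<in>I. \<forall>r\<in>carrier R. r \<otimes>\<^bsub>R\<^esub> x \<in> I)"

definition sum_set :: "('a, 'b) ring_scheme \<Rightarrow> 'a set \<Rightarrow> 'a set \<Rightarrow> 'a set" where
  "sum_set R I J = {x \<oplus>\<^bsub>R\<^esub> y | x y. x \<in> I \<and> y \<in> J}"

definition right_summand :: "('a, 'b) ring_scheme \<Rightarrow> 'a set \<Rightarrow> bool" where
  "right_summand R I \<longleftrightarrow> right_ideal_of R I \<and>
     (\<exists>J. right_ideal_of R J \<and> sum_set R I J = carrier R \<and> I \<inter> J = {\<zero>\<^bsub>R\<^esub>})"

definition left_summand :: "('a, 'b) ring_scheme \<Rightarrow> 'a set \<Rightarrow> bool" where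
  "left_summand R I \<longleftrightarrow> left_ideal_of R I \<and>
     (\<exists>J. left_ideal_of R J \<and> sum_set R I J = carrier R \<and> I \<inter> J = {\<zero>\<^bsub>R\<^esub>})"

definition right_SSP :: "('a, 'b) ring_scheme \<Rightarrow> bool" where
  "right_SSP R \<longleftrightarrow> (\<forall>A B. right_summand R A \<longrightarrow> right_summand R B \<longrightarrow>
      right_summand R (sum_set R A B))"

definition left_SSP :: "('a, 'b) ring_scheme \<Rightarrow> bool" where
  "left_SSP R \<longleftrightarrow> (\<forall>A B. left_summand R A \<longrightarrow> left_summand R B \<longrightarrow>
      left_summand R (sum_set R A B))"

definition SSP :: "('a, 'b) ring_scheme \<Rightarrow> bool" where
  "SSP R \<longleftrightarrow> right_SSP R \<and> left_SSP R"

definition corner :: "('a, 'b) ring_scheme \<Rightarrow> 'a \<Rightarrow> ('a, 'b) ring_scheme" where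
  "corner R e = R\<lparr>carrier := {e \<otimes>\<^bsub>R\<^esub> x \<otimes>\<^bsub>R\<^esub> e | x. x \<in> carrier R}, one := e\<rparr>"

end

theory Submission
  imports Defs
begin

text \<open>Right summands of a ring S are exactly the principal right ideals fS of idempotents f.
  For idempotents f, g of S = eRe, right SSP of R gives fR + gR = hR with h idempotent, and
  eh = h because f, g \<in> eR. Multiplying on the right by e gives fS + gS = (fR + gR)e = hRe = (he)S,
  and he is an idempotent of S. The left condition is the right one for the opposite ring, whose
  corner at e is the opposite of eRe.\<close>

lemma corner_operations [simp]:
  "add (corner R e) = add R" "zero (corner R e) = zero R"
  "mult (corner R e) = mult R" "one (corner R e) = e"
  by (simp_all add: corner_def)

lemma sum_set_corner [simp]: "sum_set (corner R e) = sum_set R"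
  by (simp add: sum_set_def fun_eq_iff)

definition principal_right_ideal :: "('a, 'b) ring_scheme \<Rightarrow> 'a \<Rightarrow> 'a set" where
  "principal_right_ideal R f = (\<lambda>r. f \<otimes>\<^bsub>R\<^esub> r) ` carrier R"

context ring
begin

lemma principal_right_ideal_subset:
  "f \<in> carrier R \<Longrightarrow> principal_right_ideal R f \<subseteq> carrier R"
  unfolding principal_right_ideal_def by auto

lemma right_ideal_principal_right_ideal:
  assumes f: "f \<in> carrier R"
  shows "right_ideal_of R (principal_right_ideal R f)"
proof -
  have add: "f \<otimes> r \<oplus> f \<otimes> s = f \<otimes> (r \<oplus> s)" and neg: "\<ominus> (f \<otimes> r) = f \<otimes> (\<ominus> r)"
    and mult: "f \<otimes> r \<otimes> s = f \<otimes> (r \<otimes> s)"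
    if "r \<in> carrier R" "s \<in> carrier R" for r s
    using that f by (simp_all add: r_distr r_minus m_assoc)
  have "subgroup (principal_right_ideal R f) (add_monoid R)"
    using f unfolding principal_right_ideal_def
    by (intro add.subgroupI) (auto simp: a_inv_def[symmetric] add neg)
  then show ?thesis
    using f unfolding right_ideal_of_def principal_right_ideal_def
    by (auto simp: additive_subgroupI mult)
qed

lemma idempotent_fixes_principal_right_ideal:
  assumes "f \<in> carrier R" "f \<otimes> f = f" "x \<in> principal_right_ideal R f"
  shows "f \<otimes> x = x"
  using assms unfolding principal_right_ideal_def by (auto simp: m_assoc[symmetric])

lemma idempotent_in_principal_right_ideal:
  assumes "f \<in> carrier R" "f \<otimes> f = f"
  shows "f \<in> principal_right_ideal R f"
  using assms unfolding principal_right_ideal_def by (auto intro!: image_eqI[of _ _ f])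

lemma right_summand_principal_idempotent:
  assumes f: "f \<in> carrier R" and ff: "f \<otimes> f = f"
  shows "right_summand R (principal_right_ideal R f)"
  unfolding right_summand_def
proof (intro conjI exI)
  define g where "g = \<one> \<ominus> f"
  have g: "g \<in> carrier R" and fg: "f \<otimes> g = \<zero>" and gf: "f \<oplus> g = \<one>"
    using f ff by (auto simp: g_def a_minus_def r_distr r_minus r_neg, algebra)
  show "right_ideal_of R (principal_right_ideal R f)" "right_ideal_of R (principal_right_ideal R g)"
    using f g by (auto intro: right_ideal_principal_right_ideal)
  show "sum_set R (principal_right_ideal R f) (principal_right_ideal R g) = carrier R"
  proof
    show "sum_set R (principal_right_ideal R f) (principal_right_ideal R g) \<subseteq> carrier R"
      using f g principal_right_ideal_subset unfolding sum_set_def by blast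
    show "carrier R \<subseteq> sum_set R (principal_right_ideal R f) (principal_right_ideal R g)"
    proof
      fix x assume x: "x \<in> carrier R"
      then have "x = f \<otimes> x \<oplus> g \<otimes> x"
        using f g by (simp add: l_distr[symmetric] gf)
      then show "x \<in> sum_set R (principal_right_ideal R f) (principal_right_ideal R g)"
        using x unfolding sum_set_def principal_right_ideal_def by blast
    qed
  qed
  show "principal_right_ideal R f \<inter> principal_right_ideal R g = {\<zero>}"
  proof
    show "{\<zero>} \<subseteq> principal_right_ideal R f \<inter> principal_right_ideal R g"
      using f g unfolding principal_right_ideal_def by (auto intro!: image_eqI[of _ _ \<zero>])
    show "principal_right_ideal R f \<inter> principal_right_ideal R g \<subseteq> {\<zero>}"
    proof
      fix x assume x: "x \<in> principal_right_ideal R f \<inter> principal_right_ideal R g"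
      then obtain r where r: "r \<in> carrier R" "x = g \<otimes> r"
        unfolding principal_right_ideal_def by blast
      have "x = f \<otimes> x"
        using x f ff idempotent_fixes_principal_right_ideal by auto
      also have "\<dots> = \<zero>"
        using r f g fg by (simp add: m_assoc[symmetric])
      finally show "x \<in> {\<zero>}" by simp
    qed
  qed
qed

lemma right_summand_imp_principal_idempotent:
  assumes "right_summand R I"
  obtains f where "f \<in> carrier R" "f \<otimes> f = f" "I = principal_right_ideal R f"
proof -
  obtain J where I: "right_ideal_of R I" and J: "right_ideal_of R J"
    and IJ: "sum_set R I J = carrier R" and disjoint: "I \<inter> J = {\<zero>}"
    using assms unfolding right_summand_def by blast
  interpret I: additive_subgroup I R using I unfolding right_ideal_of_def by blast
  interpret J: additive_subgroup J R using J unfolding right_ideal_of_def by blast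
  have "\<one> \<in> sum_set R I J" using IJ by simp
  then obtain f g where fg: "\<one> = f \<oplus> g" and f: "f \<in> I" and g: "g \<in> J"
    unfolding sum_set_def by blast
  have fc: "f \<in> carrier R" and gc: "g \<in> carrier R"
    using f g I.a_subset J.a_subset by auto
  have fixes_I: "f \<otimes> x = x" if x: "x \<in> I" for x
  proof -
    have xc: "x \<in> carrier R" using x I.a_subset by blast
    have split: "x = f \<otimes> x \<oplus> g \<otimes> x"
      using xc fc gc by (simp add: l_distr[symmetric] fg[symmetric])
    have fx: "f \<otimes> x \<in> I" and gx: "g \<otimes> x \<in> J"
      using f g xc I J unfolding right_ideal_of_def by auto
    have "g \<otimes> x = \<ominus> (f \<otimes> x) \<oplus> x"
      using add.inv_solve_left[of "g \<otimes> x" "f \<otimes> x" x] split xc fc gc by (simp add: a_inv_def)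
    then have "g \<otimes> x \<in> I"
      using fx x by simp
    then have "g \<otimes> x = \<zero>" using gx disjoint by blast
    then show ?thesis using split xc fc by simp
  qed
  have "I = principal_right_ideal R f"
  proof
    show "I \<subseteq> principal_right_ideal R f"
    proof
      fix x assume "x \<in> I"
      then show "x \<in> principal_right_ideal R f"
        using fixes_I I.a_subset unfolding principal_right_ideal_def by (auto intro!: image_eqI[of x _ x])
    qed
    show "principal_right_ideal R f \<subseteq> I"
      using f I unfolding right_ideal_of_def principal_right_ideal_def by auto
  qed
  with that fc fixes_I[OF f] show ?thesis by blast
qed

lemma sum_set_image_mult_right:
  assumes "I \<subseteq> carrier R" "J \<subseteq> carrier R" "c \<in> carrier R"
  shows "sum_set R ((\<lambda>x. x \<otimes> c) ` I) ((\<lambda>x. x \<otimes> c) ` J) = (\<lambda>x. x \<otimes> c) ` sum_set R I J"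
proof (intro equalityI subsetI)
  fix z assume "z \<in> sum_set R ((\<lambda>x. x \<otimes> c) ` I) ((\<lambda>x. x \<otimes> c) ` J)"
  then obtain x y where xy: "x \<in> I" "y \<in> J" "z = x \<otimes> c \<oplus> y \<otimes> c"
    unfolding sum_set_def by blast
  then have "z = (x \<oplus> y) \<otimes> c"
    using assms by (simp add: l_distr subset_iff)
  with xy show "z \<in> (\<lambda>x. x \<otimes> c) ` sum_set R I J"
    unfolding sum_set_def by blast
next
  fix z assume "z \<in> (\<lambda>x. x \<otimes> c) ` sum_set R I J"
  then obtain x y where xy: "x \<in> I" "y \<in> J" "z = (x \<oplus> y) \<otimes> c"
    unfolding sum_set_def by blast
  then have "z = x \<otimes> c \<oplus> y \<otimes> c"
    using assms by (simp add: l_distr subset_iff)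
  with xy show "z \<in> sum_set R ((\<lambda>x. x \<otimes> c) ` I) ((\<lambda>x. x \<otimes> c) ` J)"
    unfolding sum_set_def by blast
qed

end

locale ring_with_idempotent = ring R for R (structure) +
  fixes e
  assumes idem_closed: "e \<in> carrier R" and idem: "e \<otimes> e = e"
begin

lemma carrier_corner:
  "carrier (corner R e) = {z \<in> carrier R. e \<otimes> z = z \<and> z \<otimes> e = z}"
proof -
  have "z \<in> carrier R \<and> e \<otimes> z = z \<and> z \<otimes> e = z" if "x \<in> carrier R" "z = e \<otimes> x \<otimes> e" for x z
    using that idem_closed idem by (simp add: m_assoc[symmetric]) (simp add: m_assoc)
  then show ?thesis
    unfolding corner_def by force
qed

lemma ring_corner:
  "ring (corner R e)"
proof (rule ringI)
  show "abelian_group (corner R e)"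
  proof (rule abelian_groupI)
    fix x assume "x \<in> carrier (corner R e)"
    then have "\<ominus> x \<in> carrier (corner R e)" "\<ominus> x \<oplus> x = \<zero>"
      using idem_closed by (auto simp: carrier_corner r_minus l_minus l_neg)
    then show "\<exists>y\<in>carrier (corner R e). y \<oplus>\<^bsub>corner R e\<^esub> x = \<zero>\<^bsub>corner R e\<^esub>"
      by auto
  qed (use idem_closed idem in \<open>auto simp: carrier_corner r_distr l_distr a_ac\<close>)
  show "monoid (corner R e)"
    by (rule monoidI)
      (use idem_closed idem in \<open>auto simp: carrier_corner m_assoc, simp add: m_assoc[symmetric]\<close>)
qed (use idem_closed idem in \<open>auto simp: carrier_corner l_distr r_distr\<close>)

lemma principal_right_ideal_corner:
  assumes f: "f \<in> carrier (corner R e)"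
  shows "principal_right_ideal (corner R e) f = (\<lambda>x. x \<otimes> e) ` principal_right_ideal R f"
proof -
  have fc: "f \<in> carrier R" "f \<otimes> e = f"
    using f carrier_corner by auto
  have "principal_right_ideal (corner R e) f = (\<lambda>r. f \<otimes> (e \<otimes> r \<otimes> e)) ` carrier R"
    unfolding principal_right_ideal_def corner_def by (simp add: Setcompr_eq_image image_image)
  also have "\<dots> = (\<lambda>r. f \<otimes> r \<otimes> e) ` carrier R"
    using fc idem_closed by (intro image_cong) (simp_all add: m_assoc[symmetric])
  also have "\<dots> = (\<lambda>x. x \<otimes> e) ` principal_right_ideal R f"
    unfolding principal_right_ideal_def by (simp add: image_image)
  finally show ?thesis .
qed

lemma corner_idempotent_mult_idem:
  assumes h: "h \<in> carrier R" "h \<otimes> h = h" "e \<otimes> h = h"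
  shows "h \<otimes> e \<in> carrier (corner R e)" "h \<otimes> e \<otimes> (h \<otimes> e) = h \<otimes> e"
proof -
  have e_he: "e \<otimes> (h \<otimes> e) = h \<otimes> e"
    using h idem_closed by (simp add: m_assoc[symmetric])
  moreover have "h \<otimes> e \<otimes> e = h \<otimes> e"
    using h idem_closed idem by (simp add: m_assoc)
  ultimately show "h \<otimes> e \<in> carrier (corner R e)"
    using h idem_closed by (simp add: carrier_corner)
  have "h \<otimes> e \<otimes> (h \<otimes> e) = h \<otimes> (e \<otimes> (h \<otimes> e))"
    using h idem_closed by (simp add: m_assoc)
  also have "\<dots> = h \<otimes> e"
    using h idem_closed by (simp add: e_he m_assoc[symmetric])
  finally show "h \<otimes> e \<otimes> (h \<otimes> e) = h \<otimes> e" .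
qed

text \<open>hRe = (he)(eRe), because h r e = (he)(hr)e.\<close>
lemma image_mult_idem_principal_right_ideal:
  assumes h: "h \<in> carrier R" "h \<otimes> h = h" "e \<otimes> h = h"
  shows "(\<lambda>x. x \<otimes> e) ` principal_right_ideal R h = principal_right_ideal (corner R e) (h \<otimes> e)"
proof -
  have absorb: "h \<otimes> e \<otimes> (h \<otimes> r) = h \<otimes> r" if r: "r \<in> carrier R" for r
  proof -
    have "h \<otimes> e \<otimes> (h \<otimes> r) = h \<otimes> (e \<otimes> h) \<otimes> r"
      using h(1) r idem_closed by (simp add: m_assoc[symmetric])
    also have "\<dots> = h \<otimes> r"
      using h r by simp
    finally show ?thesis .
  qed
  have "(\<lambda>r. h \<otimes> r \<otimes> e) ` carrier R = (\<lambda>r. h \<otimes> e \<otimes> r \<otimes> e) ` carrier R"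
  proof (intro equalityI subsetI)
    fix x assume "x \<in> (\<lambda>r. h \<otimes> r \<otimes> e) ` carrier R"
    then obtain r where r: "r \<in> carrier R" "x = h \<otimes> r \<otimes> e" by blast
    then show "x \<in> (\<lambda>r. h \<otimes> e \<otimes> r \<otimes> e) ` carrier R"
      using h by (intro image_eqI[of _ _ "h \<otimes> r"]) (simp_all add: absorb)
  next
    fix x assume "x \<in> (\<lambda>r. h \<otimes> e \<otimes> r \<otimes> e) ` carrier R"
    then obtain r where r: "r \<in> carrier R" "x = h \<otimes> e \<otimes> r \<otimes> e" by blast
    then show "x \<in> (\<lambda>r. h \<otimes> r \<otimes> e) ` carrier R"
      using h idem_closed by (intro image_eqI[of _ _ "e \<otimes> r"]) (simp_all add: m_assoc)
  qed
  then show ?thesis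
    using principal_right_ideal_corner[OF corner_idempotent_mult_idem(1)[OF h]]
    unfolding principal_right_ideal_def by (simp add: image_image)
qed

lemma right_SSP_corner:
  assumes "right_SSP R"
  shows "right_SSP (corner R e)"
  unfolding right_SSP_def
proof (intro allI impI)
  interpret S: ring "corner R e" by (rule ring_corner)
  fix A B assume A: "right_summand (corner R e) A" and B: "right_summand (corner R e) B"
  obtain f where f: "f \<in> carrier (corner R e)" "f \<otimes>\<^bsub>corner R e\<^esub> f = f"
    and Af: "A = principal_right_ideal (corner R e) f"
    by (rule S.right_summand_imp_principal_idempotent[OF A])
  obtain g where g: "g \<in> carrier (corner R e)" "g \<otimes>\<^bsub>corner R e\<^esub> g = g"
    and Bg: "B = principal_right_ideal (corner R e) g"
    by (rule S.right_summand_imp_principal_idempotent[OF B])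
  have fc: "f \<in> carrier R" "e \<otimes> f = f" and gc: "g \<in> carrier R" "e \<otimes> g = g"
    using f g carrier_corner by auto
  have "right_summand R (sum_set R (principal_right_ideal R f) (principal_right_ideal R g))"
    using assms f g fc gc right_summand_principal_idempotent unfolding right_SSP_def by simp
  then obtain h where h: "h \<in> carrier R" "h \<otimes> h = h"
    and fRgR: "sum_set R (principal_right_ideal R f) (principal_right_ideal R g) = principal_right_ideal R h"
    by (rule right_summand_imp_principal_idempotent)
  have "h \<in> sum_set R (principal_right_ideal R f) (principal_right_ideal R g)"
    using fRgR h idempotent_in_principal_right_ideal by simp
  then obtain a b where "a \<in> carrier R" "b \<in> carrier R" "h = f \<otimes> a \<oplus> g \<otimes> b"
    unfolding sum_set_def principal_right_ideal_def by blast
  then have eh: "e \<otimes> h = h"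
    using fc gc idem_closed by (simp add: r_distr m_assoc[symmetric])
  have "sum_set (corner R e) A B = (\<lambda>x. x \<otimes> e) ` principal_right_ideal R h"
    unfolding Af Bg principal_right_ideal_corner[OF f(1)] principal_right_ideal_corner[OF g(1)] fRgR[symmetric]
    using fc gc idem_closed principal_right_ideal_subset
    by (simp add: sum_set_image_mult_right)
  also have "\<dots> = principal_right_ideal (corner R e) (h \<otimes> e)"
    by (rule image_mult_idem_principal_right_ideal[OF h eh])
  finally show "right_summand (corner R e) (sum_set (corner R e) A B)"
    using S.right_summand_principal_idempotent corner_idempotent_mult_idem[OF h eh] by simp
qed

end

definition opposite_ring :: "('a, 'b) ring_scheme \<Rightarrow> ('a, 'b) ring_scheme" where
  "opposite_ring R = R\<lparr>mult := (\<lambda>x y. y \<otimes>\<^bsub>R\<^esub> x)\<rparr>"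

lemma additive_subgroup_opposite_ring:
  "additive_subgroup I (opposite_ring R) \<longleftrightarrow> additive_subgroup I R"
  unfolding additive_subgroup_def opposite_ring_def by simp

lemma ring_opposite_ring:
  fixes R (structure)
  assumes "ring R"
  shows "ring (opposite_ring R)"
proof -
  interpret ring R by fact
  show ?thesis
  proof (rule ringI)
    show "abelian_group (opposite_ring R)"
      using is_abelian_group
      unfolding abelian_group_def abelian_monoid_def abelian_group_axioms_def opposite_ring_def
      by simp
    show "monoid (opposite_ring R)"
      by (rule monoidI) (auto simp: opposite_ring_def m_assoc)
  qed (auto simp: opposite_ring_def l_distr r_distr)
qed

lemma left_summand_iff_right_summand_opposite_ring:
  "left_summand R I \<longleftrightarrow> right_summand (opposite_ring R) I"
  unfolding left_summand_def right_summand_def left_ideal_of_def right_ideal_of_def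
    additive_subgroup_opposite_ring
  by (simp add: opposite_ring_def sum_set_def)

lemma left_SSP_iff_right_SSP_opposite_ring:
  "left_SSP R \<longleftrightarrow> right_SSP (opposite_ring R)"
  unfolding left_SSP_def right_SSP_def left_summand_iff_right_summand_opposite_ring
  by (simp add: opposite_ring_def sum_set_def)

lemma corner_opposite_ring:
  fixes R (structure)
  assumes "ring R" "e \<in> carrier R"
  shows "corner (opposite_ring R) e = opposite_ring (corner R e)"
proof -
  interpret ring R by fact
  have "{e \<otimes>\<^bsub>opposite_ring R\<^esub> x \<otimes>\<^bsub>opposite_ring R\<^esub> e | x. x \<in> carrier (opposite_ring R)}
      = {e \<otimes> x \<otimes> e | x. x \<in> carrier R}"
    using assms(2) by (auto simp: opposite_ring_def m_assoc) (metis m_assoc)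
  then show ?thesis
    unfolding corner_def opposite_ring_def by simp
qed

theorem theorem2p11:
  fixes R (structure) and e :: 'a
  assumes "ring R"
    and "e \<in> carrier R"
    and "e \<otimes> e = e"
    and "SSP R"
  shows "SSP (corner R e)"
proof -
  interpret ring_with_idempotent R e
    by (intro ring_with_idempotent.intro ring_with_idempotent_axioms.intro assms(1-3))
  interpret opposite: ring_with_idempotent "opposite_ring R" e
    by (intro ring_with_idempotent.intro ring_with_idempotent_axioms.intro ring_opposite_ring)
      (use assms in \<open>simp_all add: opposite_ring_def\<close>)
  have "right_SSP (corner R e)"
    using right_SSP_corner assms(4) unfolding SSP_def by blast
  moreover have "right_SSP (corner (opposite_ring R) e)"
    using opposite.right_SSP_corner assms(4)
    unfolding SSP_def left_SSP_iff_right_SSP_opposite_ring by blast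
  then have "left_SSP (corner R e)"
    unfolding corner_opposite_ring[OF assms(1,2)] left_SSP_iff_right_SSP_opposite_ring .
  ultimately show ?thesis
    unfolding SSP_def by blast
qed

end
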